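(* Let $\beta>1$, fix $\epsilon>0$ with $p_c-2\epsilon>0$, and let $n$ be such that $\log_2 n$, $k=n(p_c-2\epsilon)$ and $n(p_c-\epsilon)$ are integers. Set $w=l-\log_2 n$. Consider the following random code. Draw $\mathbf{G}$ uniformly from $\mathbb{F}_{2^w}^{k\times n}$. Let $\mathbf{U}_1,\dots,\mathbf{U}_N$, with $N=2^{kw}$, be the elements of $\mathbb{F}_{2^w}^k$, and for each $i$ set $\mathbf{V}_i=\mathbf{G}^{\mathrm T}\mathbf{U}_i$. Form $\mathbf{X}_i\in\mathbb{F}_2^{n\times l}$ by taking, for each $r\in[n]$, its $r$-th row to be the binary expansion of $(\mathbf{V}_i)_r$ followed by the address $\alpha(r)$. Decode $\mathbf{Z}$ as follows. If there is a unique $i\in[N]$ with $|\mathbf{X}_i\cap\mathbf{Z}|\ge n(p_c-\epsilon)$, output $\widehat{\mathbf{U}}=\mathbf{U}_i$; otherwise declare failure. Then, when $\mathbf{X}_1$ is transmitted over the outer channel, the error probability, averaged over $\mathbf{G}$ and the channel, satisfies $$\mathbb{P}(\widehat{\mathbf{U}}\ne\mathbf{U}_1)\le e^{-2n\epsilon^2}+2^{\,n-n\epsilon w}=e^{-2n\epsilon^2}+2^{\,n-n\epsilon(\beta-1)\log_2 n},$$ which tends to $0$ as $n\to\infty$.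
   Context: The outer channel takes as input a binary matrix $\mathbf{X}\in\mathbb{F}_2^{n\times l}$ with rows $\mathbf{x}_1,\dots,\mathbf{x}_n$ and acts in two stages. Channel-1 acts independently on each row and outputs $\mathbf{y}_i$, where - $\mathbf{y}_i=\mathbf{x}_i$ with probability $p_c$; - $\mathbf{y}_i=?$ (an erased row) with probability $p_e$; - $\mathbf{y}_i=\mathbf{e}$ with probability $p_s/(2^l-1)$ for each $\mathbf{e}\in\mathbb{F}_2^l\setminus\{\mathbf{x}_i\}$. Here $p_c+p_e+p_s=1$. Channel-2 takes the $n$-row matrix $\mathbf{Y}$ (erased rows kept as "?") and outputs $\mathbf{Z}$, a uniformly random permutation of its rows (each of the $n!$ permutations has probability $1/n!$). We set $\beta=l/\log_2 n$. The map $\alpha:[n]\to\mathbb{F}_2^{\log_2 n}$ is a fixed bijection (the address map). $\mathbf{X}\cap\mathbf{Z}$ denotes the intersection of the sets of non-erased row vectors of $\mathbf{X}$ and of $\mathbf{Z}$. *)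

theory Defs
  imports "HOL-Analysis.Analysis" "HOL-Combinatorics.Permutations"
begin

definition msgs :: "nat \<Rightarrow> (nat \<Rightarrow> 'f) set" where
  "msgs k = {..<k} \<rightarrow>\<^sub>E (UNIV :: 'f set)"

definition genmats :: "nat \<Rightarrow> nat \<Rightarrow> (nat \<times> nat \<Rightarrow> 'f) set" where
  "genmats k n = ({..<k} \<times> {..<n}) \<rightarrow>\<^sub>E (UNIV :: 'f set)"

definition codeword ::
  "nat \<Rightarrow> ('f::field \<Rightarrow> bool list) \<Rightarrow> (nat \<Rightarrow> bool list) \<Rightarrow> (nat \<times> nat \<Rightarrow> 'f)
    \<Rightarrow> (nat \<Rightarrow> 'f) \<Rightarrow> nat \<Rightarrow> bool list" where
  "codeword k bexp \<alpha> G u r = bexp (\<Sum>j<k. G (j, r) * u j) @ \<alpha> r"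

definition rowset :: "(nat \<Rightarrow> bool list) \<Rightarrow> nat \<Rightarrow> bool list set" where
  "rowset X n = X ` {..<n}"

text \<open>Set of non-erased rows of a channel output (None = erased row '?').\<close>
definition nonerased :: "bool list option list \<Rightarrow> bool list set" where
  "nonerased Z = {y. Some y \<in> set Z}"

definition outputs :: "nat \<Rightarrow> nat \<Rightarrow> bool list option list set" where
  "outputs l n = {Y. length Y = n \<and> (\<forall>y\<in>set Y. y = None \<or> (\<exists>e. y = Some e \<and> length e = l))}"

definition row_trans :: "nat \<Rightarrow> real \<Rightarrow> real \<Rightarrow> real \<Rightarrow> bool list \<Rightarrow> bool list option \<Rightarrow> real" where
  "row_trans l pc pe ps x y = (case y of None \<Rightarrow> pe
      | Some e \<Rightarrow> if e = x then pc else if length e = l then ps / (2 ^ l - 1) else 0)"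

definition channel1 :: "nat \<Rightarrow> nat \<Rightarrow> real \<Rightarrow> real \<Rightarrow> real \<Rightarrow> (nat \<Rightarrow> bool list)
    \<Rightarrow> bool list option list \<Rightarrow> real" where
  "channel1 l n pc pe ps X Y = (\<Prod>r<n. row_trans l pc pe ps (X r) (Y ! r))"

definition permute_rows :: "nat \<Rightarrow> (nat \<Rightarrow> nat) \<Rightarrow> 'a list \<Rightarrow> 'a list" where
  "permute_rows n \<sigma> Y = map (\<lambda>j. Y ! \<sigma> j) [0..<n]"

definition decode :: "nat \<Rightarrow> nat \<Rightarrow> nat \<Rightarrow> ('f::field \<Rightarrow> bool list) \<Rightarrow> (nat \<Rightarrow> bool list)
    \<Rightarrow> (nat \<times> nat \<Rightarrow> 'f) \<Rightarrow> bool list option list \<Rightarrow> (nat \<Rightarrow> 'f) option" where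
  "decode k n t bexp \<alpha> G Z =
     (if \<exists>!u. u \<in> msgs k \<and> t \<le> card (rowset (codeword k bexp \<alpha> G u) n \<inter> nonerased Z)
      then Some (THE u. u \<in> msgs k \<and> t \<le> card (rowset (codeword k bexp \<alpha> G u) n \<inter> nonerased Z))
      else None)"

end

theory Submission
  imports Defs "HOL-Probability.Hoeffding" "HOL-Real_Asymp.Real_Asymp"
begin

text \<open>
  The decoder can only fail if fewer than
  t = n(p_c - \<epsilon>) rows of X_1 arrive intact, or if some other codeword X_u shares at least t rows
  with the output. The number of intact rows is Binomial(n, p_c), so Hoeffding's inequality bounds
  the first event by exp(-2n\<epsilon>^2). For the second, the addresses make the rows of X_u distinct, and
  the probability that output row r lies in X_u depends on G only through the r-th entry of
  G^T(u - u_1). Since u \<noteq> u_1 these entries are independent and uniform on F_(2^w) as G varies, and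
  averaged over such an entry the probability is (p_c + p_s)/2^w \<le> 2^-w. A union bound over the
  at most 2^n sets of t rows and the 2^(wk) messages u gives 2^(n - w(t - k)) = 2^(n - n\<epsilon>w).
\<close>

lemma sum_lists_length_prod:
  fixes f :: "nat \<Rightarrow> 'a \<Rightarrow> 'b::comm_semiring_1"
  assumes "finite R"
  shows "(\<Sum>Y | length Y = n \<and> set Y \<subseteq> R. \<Prod>r<n. f r (Y ! r)) = (\<Prod>r<n. \<Sum>y\<in>R. f r y)"
proof (induction n arbitrary: f)
  case 0
  have "{Y. length Y = 0 \<and> set Y \<subseteq> R} = {[]}" by auto
  then show ?case by simp
next
  case (Suc n)
  let ?L = "{Y. length Y = n \<and> set Y \<subseteq> R}"
  have lists_Suc: "{Y. length Y = Suc n \<and> set Y \<subseteq> R} = (\<lambda>(y, Y). y # Y) ` (R \<times> ?L)"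
    by (auto simp: length_Suc_conv)
  have "inj_on (\<lambda>(y, Y). y # Y) (R \<times> ?L)" by (auto simp: inj_on_def)
  then have "(\<Sum>Y | length Y = Suc n \<and> set Y \<subseteq> R. \<Prod>r<Suc n. f r (Y ! r))
      = (\<Sum>p\<in>R \<times> ?L. \<Prod>r<Suc n. f r ((fst p # snd p) ! r))"
    unfolding lists_Suc by (subst sum.reindex) (simp_all add: case_prod_beta)
  also have "\<dots> = (\<Sum>y\<in>R. \<Sum>Y\<in>?L. f 0 y * (\<Prod>r<n. f (Suc r) (Y ! r)))"
    by (simp only: prod.lessThan_Suc_shift nth_Cons_0 nth_Cons_Suc)
       (simp add: sum.cartesian_product case_prod_beta)
  also have "\<dots> = (\<Sum>y\<in>R. f 0 y) * (\<Sum>Y\<in>?L. \<Prod>r<n. f (Suc r) (Y ! r))"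
    by (simp add: sum_product)
  also have "\<dots> = (\<Sum>y\<in>R. f 0 y) * (\<Prod>r<n. \<Sum>y\<in>R. f (Suc r) y)"
    using Suc.IH[of "\<lambda>r. f (Suc r)"] by simp
  finally show ?case by (simp only: prod.lessThan_Suc_shift)
qed

lemma prod_lessThan_if_mem:
  fixes n :: nat
  assumes "S \<subseteq> {..<n}"
  shows "(\<Prod>r<n. if r \<in> S then f r else 1) = (\<Prod>r\<in>S. f r)"
  using assms by (metis finite_lessThan inf.absorb_iff2 prod.inter_restrict)

lemma sum_subsets_card_binomial:
  fixes p :: real
  assumes "0 \<le> p" "p \<le> 1"
  shows "(\<Sum>S | S \<subseteq> {..<n} \<and> card S \<in> A. \<Prod>r<n. if r \<in> S then p else 1 - p)
       = measure_pmf.prob (binomial_pmf n p) A"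
proof -
  let ?F = "{S. S \<subseteq> {..<n} \<and> card S \<in> A}"
  have fin: "finite ?F" by (rule finite_subset[of _ "Pow {..<n}"]) auto
  have "(\<Sum>S\<in>?F. \<Prod>r<n. if r \<in> S then p else 1 - p) = (\<Sum>S\<in>?F. p ^ card S * (1 - p) ^ (n - card S))"
  proof (intro sum.cong refl)
    fix S assume "S \<in> ?F"
    then have "{..<n} \<inter> {r. r \<in> S} = S" "card ({..<n} \<inter> - {r. r \<in> S}) = n - card S"
      by (auto simp: Int_absorb1 Diff_eq[symmetric] card_Diff_subset finite_subset)
    then show "(\<Prod>r<n. if r \<in> S then p else 1 - p) = p ^ card S * (1 - p) ^ (n - card S)"
      by (simp add: prod.If_cases)
  qed
  also have "\<dots> = (\<Sum>j\<in>A \<inter> {..n}. \<Sum>S\<in>{S\<in>?F. card S = j}. p ^ card S * (1 - p) ^ (n - card S))"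
  proof (rule sum.group[symmetric])
    show "card ` ?F \<subseteq> A \<inter> {..n}"
      using card_mono[of "{..<n}"] by fastforce
  qed (use fin in auto)
  also have "\<dots> = (\<Sum>j\<in>A \<inter> {..n}. pmf (binomial_pmf n p) j)"
  proof (intro sum.cong refl)
    fix j assume "j \<in> A \<inter> {..n}"
    then have "{S\<in>?F. card S = j} = {S. S \<subseteq> {..<n} \<and> card S = j}" by auto
    then show "(\<Sum>S\<in>{S\<in>?F. card S = j}. p ^ card S * (1 - p) ^ (n - card S)) = pmf (binomial_pmf n p) j"
      using assms by (simp add: n_subsets pmf_binomial)
  qed
  also have "\<dots> = measure_pmf.prob (binomial_pmf n p) (A \<inter> {..n})"
    by (simp add: measure_measure_pmf_finite)
  also have "\<dots> = measure_pmf.prob (binomial_pmf n p) A"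
  proof -
    have "set_pmf (binomial_pmf n p) \<subseteq> {..n}"
      using assms by (auto simp: set_pmf_binomial_eq)
    then have "A \<inter> {..n} \<inter> set_pmf (binomial_pmf n p) = A \<inter> set_pmf (binomial_pmf n p)" by auto
    then show ?thesis by (metis measure_Int_set_pmf)
  qed
  finally show ?thesis .
qed

lemma prod_indicator_eq_set:
  fixes n :: nat
  assumes "S \<subseteq> {..<n}"
  shows "(\<Prod>r<n. if P r = (r \<in> S) then 1 else 0 :: real) = (if {r\<in>{..<n}. P r} = S then 1 else 0)"
proof (cases "{r\<in>{..<n}. P r} = S")
  case True
  then show ?thesis by (auto intro!: prod.neutral)
next
  case False
  with assms obtain r where "r < n" "P r \<noteq> (r \<in> S)" by auto
  then have "(\<Prod>r<n. if P r = (r \<in> S) then 1 else 0 :: real) = 0"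
    by (intro prod_zero) (auto intro: bexI[of _ r])
  with False show ?thesis by simp
qed

lemma binomial_prob_lessThan_le:
  fixes p \<epsilon> :: real
  assumes "0 \<le> p" "p \<le> 1" "\<epsilon> > 0" "n > 0" and t: "real t = real n * (p - \<epsilon>)"
  shows "measure_pmf.prob (binomial_pmf n p) {..<t} \<le> exp (- 2 * real n * \<epsilon>\<^sup>2)"
proof -
  interpret binomial_distribution n p using assms by unfold_locales auto
  have "{..<t} \<subseteq> {x. real x / real n \<le> p - \<epsilon>}"
    using t \<open>n > 0\<close> by (auto simp: field_simps)
  then have "measure_pmf.prob (binomial_pmf n p) {..<t}
      \<le> measure_pmf.prob (binomial_pmf n p) {x. real x / real n \<le> p - \<epsilon>}"
    by (rule measure_pmf.finite_measure_mono) simp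
  also have "\<dots> \<le> exp (- 2 * real n * \<epsilon>\<^sup>2)"
    using prob_le'[OF \<open>n > 0\<close>, of \<epsilon>] \<open>\<epsilon> > 0\<close> by simp
  finally show ?thesis .
qed

definition row_alphabet :: "nat \<Rightarrow> bool list option set" where
  "row_alphabet l = insert None (Some ` {e. length e = l})"

lemma finite_row_alphabet: "finite (row_alphabet l)"
  using finite_lists_length_eq[of "UNIV :: bool set" l] by (simp add: row_alphabet_def)

lemma outputs_eq_lists: "outputs l n = {Y. length Y = n \<and> set Y \<subseteq> row_alphabet l}"
  unfolding outputs_def row_alphabet_def by (auto; metis option.exhaust)

lemma sum_row_alphabet:
  "(\<Sum>y\<in>row_alphabet l. f y) = f None + (\<Sum>e | length e = l. f (Some e))"
  unfolding row_alphabet_def using finite_lists_length_eq[of "UNIV :: bool set" l]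
  by (subst sum.insert) (auto simp: sum.reindex)

lemma sum_outputs_channel1_prod:
  "(\<Sum>Y\<in>outputs l n. channel1 l n pc pe ps X Y * (\<Prod>r<n. g r (Y ! r)))
   = (\<Prod>r<n. \<Sum>y\<in>row_alphabet l. row_trans l pc pe ps (X r) y * g r y)"
  unfolding outputs_eq_lists channel1_def prod.distrib[symmetric]
  by (rule sum_lists_length_prod[OF finite_row_alphabet])

lemma pow2_minus_one_pos: "l \<ge> 1 \<Longrightarrow> (2::real) ^ l - 1 > 0"
  using one_less_power[of "2::real" l] by simp

lemma row_trans_nonneg:
  assumes "pc \<ge> 0" "pe \<ge> 0" "ps \<ge> 0"
  shows "row_trans l pc pe ps x y \<ge> 0"
proof -
  have "(2::real) ^ l \<ge> 1" by simp
  then show ?thesis using assms by (auto simp: row_trans_def split: option.split)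
qed

lemma channel1_nonneg:
  assumes "pc \<ge> 0" "pe \<ge> 0" "ps \<ge> 0"
  shows "channel1 l n pc pe ps X Y \<ge> 0"
  unfolding channel1_def by (intro prod_nonneg row_trans_nonneg assms)

lemma sum_row_trans_Some:
  assumes "R \<subseteq> {e. length e = l}" "finite R"
  shows "(\<Sum>e\<in>R. row_trans l pc pe ps x (Some e))
     = (if x \<in> R then pc else 0) + ps / (2 ^ l - 1) * real (card (R - {x}))"
proof -
  have "(\<Sum>e\<in>R. row_trans l pc pe ps x (Some e)) = (\<Sum>e\<in>R. if e = x then pc else ps / (2 ^ l - 1))"
    using assms(1) by (intro sum.cong) (auto simp: row_trans_def)
  also have "\<dots> = (if x \<in> R then pc else 0) + ps / (2 ^ l - 1) * real (card (R - {x}))"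
    using assms(2) by (simp add: sum.If_cases Int_absorb1 Diff_eq Int_commute card_Diff_singleton_if)
  finally show ?thesis .
qed

lemma sum_row_trans:
  assumes "length x = l" "l \<ge> 1" "pc + pe + ps = 1"
  shows "(\<Sum>y\<in>row_alphabet l. row_trans l pc pe ps x y) = 1"
proof -
  have "card ({e. length e = l} - {x}) = 2 ^ l - 1"
    using assms(1) card_lists_length_eq[of "UNIV :: bool set" l] by simp
  moreover have "real (2 ^ l - 1 :: nat) = 2 ^ l - 1"
    by (simp add: of_nat_diff)
  ultimately show ?thesis
    using sum_row_trans_Some[of "{e. length e = l}" l pc pe ps x] finite_lists_length_eq[of "UNIV :: bool set" l]
      assms pow2_minus_one_pos[OF assms(2)]
    by (simp add: sum_row_alphabet row_trans_def)
qed

lemma sum_row_trans_correct: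
  assumes "length x = l" "l \<ge> 1" "pc + pe + ps = 1"
  shows "(\<Sum>y\<in>row_alphabet l. row_trans l pc pe ps x y * (if (y = Some x) = b then 1 else 0))
       = (if b then pc else 1 - pc)"
proof -
  have "Some x \<in> row_alphabet l" using assms(1) by (simp add: row_alphabet_def)
  then have correct: "(\<Sum>y\<in>row_alphabet l. row_trans l pc pe ps x y * (if y = Some x then 1 else 0)) = pc"
    by (simp add: finite_row_alphabet if_distrib[of "(*) _"] sum.delta' cong: if_cong)
       (simp add: row_trans_def)
  have "(\<Sum>y\<in>row_alphabet l. row_trans l pc pe ps x y)
      = (\<Sum>y\<in>row_alphabet l. row_trans l pc pe ps x y * (if y = Some x then 1 else 0))
        + (\<Sum>y\<in>row_alphabet l. row_trans l pc pe ps x y * (if y \<noteq> Some x then 1 else 0))"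
    by (subst sum.distrib[symmetric]) (intro sum.cong, auto)
  then show ?thesis using correct sum_row_trans[OF assms] by (cases b) simp_all
qed

lemma channel1_correct_rows_binomial:
  assumes probs: "pc \<ge> 0" "pe \<ge> 0" "ps \<ge> 0" "pc + pe + ps = 1"
    and "l \<ge> 1" and lens: "\<And>r. r < n \<Longrightarrow> length (X r) = l"
  shows "(\<Sum>Y\<in>outputs l n. channel1 l n pc pe ps X Y
            * (if card {r\<in>{..<n}. Y ! r = Some (X r)} \<in> A then 1 else 0))
       = measure_pmf.prob (binomial_pmf n pc) A"
proof -
  define F where "F = {S. S \<subseteq> {..<n} \<and> card S \<in> A}"
  have "finite F" unfolding F_def by (rule finite_subset[of _ "Pow {..<n}"]) auto
  then have indicator: "(if card {r\<in>{..<n}. Y ! r = Some (X r)} \<in> A then 1 else 0 :: real)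
      = (\<Sum>S\<in>F. \<Prod>r<n. if (Y ! r = Some (X r)) = (r \<in> S) then 1 else 0)" for Y
  proof -
    have "(\<Sum>S\<in>F. \<Prod>r<n. if (Y ! r = Some (X r)) = (r \<in> S) then 1 else 0 :: real)
        = (\<Sum>S\<in>F. if {r\<in>{..<n}. Y ! r = Some (X r)} = S then 1 else 0)"
      by (intro sum.cong refl prod_indicator_eq_set) (simp add: F_def)
    then show ?thesis using \<open>finite F\<close> by (auto simp: sum.delta F_def)
  qed
  have "(\<Sum>Y\<in>outputs l n. channel1 l n pc pe ps X Y
            * (if card {r\<in>{..<n}. Y ! r = Some (X r)} \<in> A then 1 else 0))
      = (\<Sum>S\<in>F. \<Sum>Y\<in>outputs l n. channel1 l n pc pe ps X Y
            * (\<Prod>r<n. if (Y ! r = Some (X r)) = (r \<in> S) then 1 else 0))"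
    unfolding indicator sum_distrib_left by (rule sum.swap)
  also have "\<dots> = (\<Sum>S\<in>F. \<Prod>r<n. if r \<in> S then pc else 1 - pc)"
  proof (intro sum.cong refl)
    fix S
    show "(\<Sum>Y\<in>outputs l n. channel1 l n pc pe ps X Y
            * (\<Prod>r<n. if (Y ! r = Some (X r)) = (r \<in> S) then 1 else 0))
        = (\<Prod>r<n. if r \<in> S then pc else 1 - pc)"
      using sum_outputs_channel1_prod[of l n pc pe ps X "\<lambda>r y. if (y = Some (X r)) = (r \<in> S) then 1 else 0"]
      by (simp add: sum_row_trans_correct[OF lens assms(5) probs(4)])
  qed
  also have "\<dots> = measure_pmf.prob (binomial_pmf n pc) A"
    unfolding F_def using probs by (intro sum_subsets_card_binomial) auto
  finally show ?thesis .
qed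

lemma sum_row_alphabet_restrict:
  fixes f :: "bool list option \<Rightarrow> real"
  assumes "R \<subseteq> {e. length e = l}"
  shows "(\<Sum>y\<in>row_alphabet l. f y * (if y \<in> Some ` R then 1 else 0)) = (\<Sum>e\<in>R. f (Some e))"
proof -
  have "finite {e :: bool list. length e = l}"
    using finite_lists_length_eq[of "UNIV :: bool set" l] by simp
  then have "(\<Sum>e | length e = l. if e \<in> R then f (Some e) else 0) = (\<Sum>e\<in>R. f (Some e))"
    using assms by (simp add: sum.inter_restrict[symmetric] Int_absorb1)
  moreover have "f (Some e) * (if e \<in> R then 1 else 0) = (if e \<in> R then f (Some e) else 0)" for e
    by simp
  ultimately show ?thesis by (simp add: sum_row_alphabet inj_image_mem_iff)
qed

lemma hits_indicator_le:
  fixes Y :: "bool list option list"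
  assumes "length Y = n"
  shows "(if t \<le> card (R \<inter> nonerased Y) then 1 else 0 :: real)
      \<le> (\<Sum>S | S \<subseteq> {..<n} \<and> card S = t. \<Prod>r\<in>S. if Y ! r \<in> Some ` R then 1 else 0)"
proof (cases "t \<le> card (R \<inter> nonerased Y)")
  case True
  define I where "I = {r\<in>{..<n}. Y ! r \<in> Some ` R}"
  have "R \<inter> nonerased Y \<subseteq> (\<lambda>r. the (Y ! r)) ` I"
    using assms by (force simp: nonerased_def in_set_conv_nth I_def)
  then have "card (R \<inter> nonerased Y) \<le> card ((\<lambda>r. the (Y ! r)) ` I)"
    by (intro card_mono) (simp_all add: I_def)
  also have "\<dots> \<le> card I"
    by (rule card_image_le) (simp add: I_def)
  finally have "card (R \<inter> nonerased Y) \<le> card I" .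
  with True obtain S where S: "S \<subseteq> I" "card S = t"
    by (metis le_trans obtain_subset_with_card_n)
  then have "S \<in> {S. S \<subseteq> {..<n} \<and> card S = t}" "(\<Prod>r\<in>S. if Y ! r \<in> Some ` R then 1 else 0 :: real) = 1"
    by (auto simp: I_def intro!: prod.neutral)
  moreover have "finite {S. S \<subseteq> {..<n} \<and> card S = t}"
    by (rule finite_subset[of _ "Pow {..<n}"]) auto
  ultimately have "1 \<le> (\<Sum>S | S \<subseteq> {..<n} \<and> card S = t. \<Prod>r\<in>S. if Y ! r \<in> Some ` R then 1 else 0 :: real)"
    using member_le_sum[of S "{S. S \<subseteq> {..<n} \<and> card S = t}" "\<lambda>S. \<Prod>r\<in>S. if Y ! r \<in> Some ` R then 1 else 0 :: real"]
    by (simp add: prod_nonneg)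
  with True show ?thesis by simp
qed (simp add: sum_nonneg prod_nonneg)

lemma channel1_hits_union_bound:
  assumes probs: "pc \<ge> 0" "pe \<ge> 0" "ps \<ge> 0" "pc + pe + ps = 1"
    and "l \<ge> 1" and lens: "\<And>r. r < n \<Longrightarrow> length (X r) = l"
    and R: "R \<subseteq> {e. length e = l}"
  shows "(\<Sum>Y\<in>outputs l n. channel1 l n pc pe ps X Y * (if t \<le> card (R \<inter> nonerased Y) then 1 else 0))
       \<le> (\<Sum>S | S \<subseteq> {..<n} \<and> card S = t. \<Prod>r\<in>S. \<Sum>e\<in>R. row_trans l pc pe ps (X r) (Some e))"
proof -
  define T where "T = {S. S \<subseteq> {..<n} \<and> card S = t}"
  define hit where "hit y = (if y \<in> Some ` R then 1 else 0 :: real)" for y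
  have "(\<Sum>Y\<in>outputs l n. channel1 l n pc pe ps X Y * (if t \<le> card (R \<inter> nonerased Y) then 1 else 0))
      \<le> (\<Sum>Y\<in>outputs l n. channel1 l n pc pe ps X Y * (\<Sum>S\<in>T. \<Prod>r\<in>S. hit (Y ! r)))"
    unfolding T_def hit_def
    by (intro sum_mono mult_left_mono channel1_nonneg probs hits_indicator_le) (simp add: outputs_def)
  also have "\<dots> = (\<Sum>Y\<in>outputs l n. \<Sum>S\<in>T. channel1 l n pc pe ps X Y
                    * (\<Prod>r<n. if r \<in> S then hit (Y ! r) else 1))"
    unfolding sum_distrib_left
    by (intro sum.cong refl arg_cong[where f = "(*) _"] prod_lessThan_if_mem[symmetric]) (simp add: T_def)
  also have "\<dots> = (\<Sum>S\<in>T. \<Sum>Y\<in>outputs l n. channel1 l n pc pe ps X Y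
                    * (\<Prod>r<n. if r \<in> S then hit (Y ! r) else 1))"
    by (rule sum.swap)
  also have "\<dots> = (\<Sum>S\<in>T. \<Prod>r<n. \<Sum>y\<in>row_alphabet l. row_trans l pc pe ps (X r) y
                    * (if r \<in> S then hit y else 1))"
  proof (intro sum.cong refl)
    fix S
    show "(\<Sum>Y\<in>outputs l n. channel1 l n pc pe ps X Y * (\<Prod>r<n. if r \<in> S then hit (Y ! r) else 1))
        = (\<Prod>r<n. \<Sum>y\<in>row_alphabet l. row_trans l pc pe ps (X r) y * (if r \<in> S then hit y else 1))"
      using sum_outputs_channel1_prod[of l n pc pe ps X "\<lambda>r y. if r \<in> S then hit y else 1"] by simp
  qed
  also have "\<dots> = (\<Sum>S\<in>T. \<Prod>r<n. if r \<in> S then \<Sum>e\<in>R. row_trans l pc pe ps (X r) (Some e) else 1)"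
    by (intro sum.cong prod.cong refl)
       (simp add: hit_def sum_row_alphabet_restrict[OF R] sum_row_trans[OF lens \<open>l \<ge> 1\<close> probs(4)])
  also have "\<dots> = (\<Sum>S\<in>T. \<Prod>r\<in>S. \<Sum>e\<in>R. row_trans l pc pe ps (X r) (Some e))"
    by (simp add: prod_lessThan_if_mem T_def)
  finally show ?thesis unfolding T_def .
qed

lemma finite_msgs: "finite (msgs k :: (nat \<Rightarrow> 'f::finite) set)"
  unfolding msgs_def by (simp add: finite_PiE)

lemma card_msgs: "card (msgs k :: (nat \<Rightarrow> 'f::finite) set) = CARD('f) ^ k"
  unfolding msgs_def by (simp add: card_PiE)

lemma card_genmats: "card (genmats k n :: (nat \<times> nat \<Rightarrow> 'f::finite) set) = CARD('f) ^ (k * n)"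
  unfolding genmats_def by (simp add: card_PiE card_cartesian_product)

lemma card_msgs_dot_eq:
  fixes d :: "nat \<Rightarrow> 'f::{field,finite}"
  assumes j0: "j0 < k" "d j0 \<noteq> 0"
  shows "card {c \<in> msgs k. (\<Sum>j<k. c j * d j) = v} = CARD('f) ^ (k - 1)"
proof -
  define K where "K = {..<k} - {j0}"
  have split: "(\<Sum>j<k. c j * d j) = c j0 * d j0 + (\<Sum>j\<in>K. c j * d j)" for c :: "nat \<Rightarrow> 'f"
    using j0(1) by (simp add: K_def sum.remove[of "{..<k}" j0])
  define extend where "extend c = c(j0 := (v - (\<Sum>j\<in>K. c j * d j)) / d j0)" for c :: "nat \<Rightarrow> 'f"
  have "bij_betw (\<lambda>c. restrict c K) {c \<in> msgs k. (\<Sum>j<k. c j * d j) = v} (K \<rightarrow>\<^sub>E UNIV)"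
  proof (rule bij_betw_byWitness[where f' = extend])
    show "\<forall>c\<in>{c \<in> msgs k. (\<Sum>j<k. c j * d j) = v}. extend (restrict c K) = c"
    proof
      fix c assume c: "c \<in> {c \<in> msgs k. (\<Sum>j<k. c j * d j) = v}"
      then have "(v - (\<Sum>j\<in>K. c j * d j)) / d j0 = c j0"
        using j0(2) split[of c] by (simp add: field_simps)
      with c show "extend (restrict c K) = c"
        by (auto simp: extend_def K_def msgs_def PiE_def extensional_def fun_eq_iff)
    qed
    show "\<forall>c\<in>K \<rightarrow>\<^sub>E UNIV. restrict (extend c) K = c"
      by (auto simp: extend_def K_def PiE_def extensional_def fun_eq_iff)
    show "(\<lambda>c. restrict c K) ` {c \<in> msgs k. (\<Sum>j<k. c j * d j) = v} \<subseteq> K \<rightarrow>\<^sub>E UNIV"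
      by auto
    show "extend ` (K \<rightarrow>\<^sub>E UNIV) \<subseteq> {c \<in> msgs k. (\<Sum>j<k. c j * d j) = v}"
    proof
      fix c' assume "c' \<in> extend ` (K \<rightarrow>\<^sub>E UNIV)"
      then obtain c where c: "c \<in> K \<rightarrow>\<^sub>E UNIV" and c': "c' = extend c" by blast
      have "(\<Sum>j\<in>K. extend c j * d j) = (\<Sum>j\<in>K. c j * d j)"
        by (intro sum.cong) (auto simp: extend_def K_def)
      then have "(\<Sum>j<k. extend c j * d j) = v"
        using j0(2) by (simp add: split) (simp add: extend_def)
      moreover have "extend c \<in> msgs k"
        using c j0(1) by (auto simp: msgs_def extend_def K_def PiE_def extensional_def)
      ultimately show "c' \<in> {c \<in> msgs k. (\<Sum>j<k. c j * d j) = v}" using c' by simp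
    qed
  qed
  then show ?thesis
    using j0(1) by (simp add: bij_betw_same_card card_PiE K_def)
qed

lemma sum_msgs_dot:
  fixes d :: "nat \<Rightarrow> 'f::{field,finite}" and h :: "'f \<Rightarrow> real"
  assumes "j0 < k" "d j0 \<noteq> 0"
  shows "(\<Sum>c\<in>msgs k. h (\<Sum>j<k. c j * d j)) = real CARD('f) ^ (k - 1) * (\<Sum>v\<in>UNIV. h v)"
proof -
  have "(\<Sum>c\<in>msgs k. h (\<Sum>j<k. c j * d j))
      = (\<Sum>v\<in>UNIV. \<Sum>c\<in>{c \<in> msgs k. (\<Sum>j<k. c j * d j) = v}. h (\<Sum>j<k. c j * d j))"
    by (rule sum.group[symmetric]) (auto simp: finite_msgs)
  also have "\<dots> = (\<Sum>v\<in>UNIV. real CARD('f) ^ (k - 1) * h v)"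
    by (intro sum.cong refl) (simp add: card_msgs_dot_eq[of j0 k d, OF assms])
  finally show ?thesis by (simp add: sum_distrib_left)
qed

lemma bij_betw_genmats_columns:
  "bij_betw (\<lambda>G. \<lambda>r\<in>{..<n}. \<lambda>j\<in>{..<k}. G (j, r)) (genmats k n) ({..<n} \<rightarrow>\<^sub>E msgs k)"
proof (rule bij_betw_byWitness[where f' = "\<lambda>C. \<lambda>(j, r)\<in>{..<k} \<times> {..<n}. C r j"])
  show "\<forall>C\<in>{..<n} \<rightarrow>\<^sub>E msgs k. (\<lambda>r\<in>{..<n}. \<lambda>j\<in>{..<k}.
          (\<lambda>(j, r)\<in>{..<k} \<times> {..<n}. C r j) (j, r)) = C"
    by (fastforce simp: msgs_def PiE_def extensional_def fun_eq_iff Pi_iff)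
qed (auto simp: genmats_def msgs_def PiE_def extensional_def fun_eq_iff)

lemma sum_genmats_prod_columns:
  fixes d :: "nat \<Rightarrow> 'f::{field,finite}" and h :: "'f \<Rightarrow> real"
  assumes j0: "j0 < k" "d j0 \<noteq> 0" and S: "S \<subseteq> {..<n}"
  shows "(\<Sum>G\<in>genmats k n. \<Prod>r\<in>S. h (\<Sum>j<k. G (j, r) * d j))
       = real (card (genmats k n :: (nat \<times> nat \<Rightarrow> 'f) set)) * ((\<Sum>v\<in>UNIV. h v) / real CARD('f)) ^ card S"
proof -
  define q where "q = real CARD('f)"
  define H where "H r c = (if r \<in> S then h (\<Sum>j<k. c j * d j) else 1)" for r and c :: "nat \<Rightarrow> 'f"
  have restr: "(\<Sum>j<k. (\<lambda>j\<in>{..<k}. G (j, r)) j * d j) = (\<Sum>j<k. G (j, r) * d j)" for G r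
    by (rule sum.cong) auto
  have "(\<Sum>G\<in>genmats k n. \<Prod>r\<in>S. h (\<Sum>j<k. G (j, r) * d j))
      = (\<Sum>G\<in>genmats k n. \<Prod>r<n. H r (\<lambda>j\<in>{..<k}. G (j, r)))"
    using S by (simp only: H_def restr prod_lessThan_if_mem)
  also have "\<dots> = (\<Sum>G\<in>genmats k n. \<Prod>r<n. H r ((\<lambda>r\<in>{..<n}. \<lambda>j\<in>{..<k}. G (j, r)) r))"
    by (intro sum.cong prod.cong refl) simp
  also have "\<dots> = (\<Sum>C\<in>{..<n} \<rightarrow>\<^sub>E msgs k. \<Prod>r<n. H r (C r))"
    by (rule sum.reindex_bij_betw[OF bij_betw_genmats_columns])
  also have "\<dots> = (\<Prod>r<n. \<Sum>c\<in>msgs k. H r c)"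
    by (rule prod_sum_PiE[symmetric]) (auto simp: finite_msgs)
  also have "\<dots> = (\<Prod>r<n. if r \<in> S then q ^ (k - 1) * (\<Sum>v\<in>UNIV. h v) else q ^ k)"
    by (intro prod.cong refl) (simp add: H_def q_def sum_msgs_dot[of j0 k d, OF j0] card_msgs)
  also have "\<dots> = (q ^ (k - 1) * (\<Sum>v\<in>UNIV. h v)) ^ card S * (q ^ k) ^ (n - card S)"
    using S by (simp add: prod.If_cases Int_absorb1 Diff_eq[symmetric] card_Diff_subset finite_subset)
  also have "\<dots> = (q ^ k) ^ n * ((\<Sum>v\<in>UNIV. h v) / q) ^ card S"
  proof -
    have "card S \<le> n" using S by (metis card_lessThan card_mono finite_lessThan)
    then have "(q ^ k) ^ n = (q ^ k) ^ card S * (q ^ k) ^ (n - card S)"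
      by (simp add: power_add[symmetric])
    moreover have "q ^ k * ((\<Sum>v\<in>UNIV. h v) / q) = q ^ (k - 1) * (\<Sum>v\<in>UNIV. h v)"
      using j0(1) by (cases k) (simp_all add: q_def)
    ultimately show ?thesis
      by (simp add: power_mult_distrib[symmetric] mult_ac)
  qed
  finally show ?thesis by (simp add: card_genmats q_def power_mult)
qed

lemma nonerased_permute_rows:
  assumes "\<sigma> permutes {..<n}" "length Y = n"
  shows "nonerased (permute_rows n \<sigma> Y) = nonerased Y"
proof -
  have "set (permute_rows n \<sigma> Y) = (\<lambda>i. Y ! i) ` \<sigma> ` {..<n}"
    by (auto simp: permute_rows_def image_image)
  also have "\<dots> = set Y"
    using assms by (auto simp: permutes_image in_set_conv_nth)
  finally show ?thesis by (simp add: nonerased_def)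
qed

lemma decode_permute_rows:
  assumes "\<sigma> permutes {..<n}" "length Y = n"
  shows "decode k n t bexp \<alpha> G (permute_rows n \<sigma> Y) = decode k n t bexp \<alpha> G Y"
  using nonerased_permute_rows[OF assms] by (simp add: decode_def)

lemma decode_error_le:
  fixes u1 :: "nat \<Rightarrow> 'f::{field,finite}"
  assumes u1: "u1 \<in> msgs k" and inj: "inj_on (codeword k bexp \<alpha> G u1) {..<n}" and "length Y = n"
  shows "(if decode k n t bexp \<alpha> G Y \<noteq> Some u1 then 1 else 0 :: real)
    \<le> (if card {r\<in>{..<n}. Y ! r = Some (codeword k bexp \<alpha> G u1 r)} < t then 1 else 0)
       + (\<Sum>u\<in>msgs k - {u1}. if t \<le> card (rowset (codeword k bexp \<alpha> G u) n \<inter> nonerased Y) then 1 else 0)"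
    (is "_ \<le> _ + (\<Sum>u\<in>_. ?B u)")
proof -
  let ?X = "codeword k bexp \<alpha> G u1"
  let ?P = "\<lambda>u. u \<in> msgs k \<and> t \<le> card (rowset (codeword k bexp \<alpha> G u) n \<inter> nonerased Y)"
  have nonneg: "0 \<le> (\<Sum>u\<in>msgs k - {u1}. ?B u)" by (simp add: sum_nonneg)
  show ?thesis
  proof (cases "decode k n t bexp \<alpha> G Y \<noteq> Some u1 \<and> t \<le> card {r\<in>{..<n}. Y ! r = Some (?X r)}")
    case True
    have "?X ` {r\<in>{..<n}. Y ! r = Some (?X r)} \<subseteq> rowset ?X n \<inter> nonerased Y"
      using \<open>length Y = n\<close> by (auto simp: rowset_def nonerased_def) (metis nth_mem)
    then have "card (?X ` {r\<in>{..<n}. Y ! r = Some (?X r)}) \<le> card (rowset ?X n \<inter> nonerased Y)"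
      by (intro card_mono) (simp_all add: rowset_def)
    moreover have "card (?X ` {r\<in>{..<n}. Y ! r = Some (?X r)}) = card {r\<in>{..<n}. Y ! r = Some (?X r)}"
      by (rule card_image) (rule inj_on_subset[OF inj], auto)
    ultimately have "?P u1" using True u1 by simp
    have "\<not> (\<exists>!u. ?P u)"
    proof
      assume ex1: "\<exists>!u. ?P u"
      then have "(THE u. ?P u) = u1" using the1_equality[of ?P u1] \<open>?P u1\<close> by blast
      with ex1 True show False by (simp add: decode_def)
    qed
    with \<open>?P u1\<close> obtain u where "?P u" "u \<noteq> u1" by blast
    then have u: "u \<in> msgs k - {u1}" "?B u = 1" by simp_all
    have "?B u \<le> (\<Sum>u\<in>msgs k - {u1}. ?B u)"
      using u(1) by (intro member_le_sum) (auto simp: finite_msgs)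
    with u(2) show ?thesis by simp
  next
    case False
    then show ?thesis using nonneg by auto
  qed
qed

locale addressed_code =
  fixes n w m :: nat and bexp :: "'f::{field,finite} \<Rightarrow> bool list" and \<alpha> :: "nat \<Rightarrow> bool list"
  assumes bexp_bij: "bij_betw bexp UNIV {xs. length xs = w}"
    and alpha_bij: "bij_betw \<alpha> {..<n} {xs. length xs = m}"
begin

lemma card_field: "CARD('f) = 2 ^ w"
  using bij_betw_same_card[OF bexp_bij] card_lists_length_eq[of "UNIV :: bool set" w] by simp

lemma n_eq: "n = 2 ^ m"
  using bij_betw_same_card[OF alpha_bij] card_lists_length_eq[of "UNIV :: bool set" m] by simp

lemma w_pos: "w \<ge> 1"
proof (rule ccontr)
  assume "\<not> w \<ge> 1"
  then have "CARD('f) = 1" by (simp add: card_field)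
  moreover have "card {0, 1 :: 'f} \<le> CARD('f)" by (rule card_mono) simp_all
  ultimately show False by simp
qed

lemma length_codeword: "r < n \<Longrightarrow> length (codeword k bexp \<alpha> G u r) = w + m"
  using bij_betw_apply[OF bexp_bij] bij_betw_apply[OF alpha_bij] by (simp add: codeword_def)

lemma codeword_eq_iff:
  assumes "r < n" "r' < n"
  shows "codeword k bexp \<alpha> G u r = codeword k bexp \<alpha> G u' r'
     \<longleftrightarrow> r = r' \<and> (\<Sum>j<k. G (j, r) * u j) = (\<Sum>j<k. G (j, r) * u' j)"
proof
  assume "codeword k bexp \<alpha> G u r = codeword k bexp \<alpha> G u' r'"
  then have "bexp (\<Sum>j<k. G (j, r) * u j) = bexp (\<Sum>j<k. G (j, r') * u' j)" "\<alpha> r = \<alpha> r'"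
    using bij_betw_apply[OF bexp_bij] by (simp_all add: codeword_def append_eq_append_conv)
  then show "r = r' \<and> (\<Sum>j<k. G (j, r) * u j) = (\<Sum>j<k. G (j, r) * u' j)"
    using bij_betw_imp_inj_on[OF bexp_bij] bij_betw_imp_inj_on[OF alpha_bij] assms
    by (auto simp: inj_on_def)
qed (auto simp: codeword_def)

lemma inj_on_codeword: "inj_on (codeword k bexp \<alpha> G u) {..<n}"
  by (auto simp: inj_on_def codeword_eq_iff)

text \<open>The mass that Channel-1 sends from row r of X_u1 to the rows of another codeword X_u; it
  depends on G only through the r-th entry of G^T (u - u1).\<close>
definition hit_mass :: "real \<Rightarrow> real \<Rightarrow> 'f \<Rightarrow> real" where
  "hit_mass pc ps v = ps / (2 ^ (w + m) - 1) * n + (if v = 0 then pc - ps / (2 ^ (w + m) - 1) else 0)"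

lemma sum_rowset_row_trans:
  assumes "r < n"
  shows "(\<Sum>e\<in>rowset (codeword k bexp \<alpha> G u) n. row_trans (w + m) pc pe ps (codeword k bexp \<alpha> G u1 r) (Some e))
       = hit_mass pc ps (\<Sum>j<k. G (j, r) * (u j - u1 j))"
proof -
  let ?R = "rowset (codeword k bexp \<alpha> G u) n" and ?x = "codeword k bexp \<alpha> G u1 r"
  have R: "?R \<subseteq> {e. length e = w + m}" "finite ?R" "card ?R = n"
    using length_codeword card_image[OF inj_on_codeword] by (auto simp: rowset_def)
  have "?x \<in> ?R \<longleftrightarrow> (\<exists>r'<n. codeword k bexp \<alpha> G u r' = ?x)"
    unfolding rowset_def image_iff by (metis lessThan_iff)
  also have "\<dots> \<longleftrightarrow> (\<Sum>j<k. G (j, r) * u j) = (\<Sum>j<k. G (j, r) * u1 j)"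
    using assms codeword_eq_iff[of _ r] by blast
  also have "\<dots> \<longleftrightarrow> (\<Sum>j<k. G (j, r) * (u j - u1 j)) = 0"
    by (simp add: right_diff_distrib sum_subtractf)
  finally have mem: "?x \<in> ?R \<longleftrightarrow> (\<Sum>j<k. G (j, r) * (u j - u1 j)) = 0" .
  show ?thesis
  proof (cases "?x \<in> ?R")
    case True
    then have "card (?R - {?x}) = n - 1" using R by simp
    moreover have "n \<ge> 1" using assms by simp
    ultimately show ?thesis
      using True mem sum_row_trans_Some[OF R(1,2), of pc pe ps ?x]
      by (simp add: hit_mass_def of_nat_diff right_diff_distrib)
  next
    case False
    then have "card (?R - {?x}) = n" using R by simp
    then show ?thesis
      using False mem sum_row_trans_Some[OF R(1,2), of pc pe ps ?x] by (simp add: hit_mass_def)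
  qed
qed

lemma sum_hit_mass: "(\<Sum>v\<in>UNIV. hit_mass pc ps v) = pc + ps"
proof -
  define c where "c = ps / (2 ^ (w + m) - 1)"
  have card_n: "real CARD('f) * real n = 2 ^ (w + m)"
    by (simp add: card_field n_eq power_add)
  have "(2::real) ^ (w + m) - 1 > 0"
    using w_pos by (simp add: pow2_minus_one_pos)
  then have c: "c * (2 ^ (w + m) - 1) = ps"
    by (simp add: c_def)
  have "(\<Sum>v\<in>UNIV. hit_mass pc ps v) = real CARD('f) * (c * n) + (pc - c)"
    by (simp add: hit_mass_def sum.distrib c_def)
  also have "\<dots> = pc + c * (2 ^ (w + m) - 1)"
    using card_n by (simp add: algebra_simps)
  finally show ?thesis using c by simp
qed

lemma pairwise_error_le:
  assumes probs: "pc \<ge> 0" "pe \<ge> 0" "ps \<ge> 0" "pc + pe + ps = 1"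
    and u: "u \<in> msgs k" and u1: "u1 \<in> msgs k" and "u \<noteq> u1"
  shows "(\<Sum>G\<in>genmats k n. \<Sum>Y\<in>outputs (w + m) n. channel1 (w + m) n pc pe ps (codeword k bexp \<alpha> G u1) Y
            * (if t \<le> card (rowset (codeword k bexp \<alpha> G u) n \<inter> nonerased Y) then 1 else 0))
       \<le> real (card (genmats k n :: (nat \<times> nat \<Rightarrow> 'f) set)) * 2 ^ n / real CARD('f) ^ t"
proof -
  define T where "T = {S. S \<subseteq> {..<n} \<and> card S = t}"
  define NG where "NG = real (card (genmats k n :: (nat \<times> nat \<Rightarrow> 'f) set))"
  define q where "q = real CARD('f)"
  obtain j0 where j0: "j0 < k" "u j0 - u1 j0 \<noteq> 0"
    using u u1 \<open>u \<noteq> u1\<close> by (auto simp: msgs_def PiE_def extensional_def fun_eq_iff) (metis not_less)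
  have "(\<Sum>G\<in>genmats k n. \<Sum>Y\<in>outputs (w + m) n. channel1 (w + m) n pc pe ps (codeword k bexp \<alpha> G u1) Y
            * (if t \<le> card (rowset (codeword k bexp \<alpha> G u) n \<inter> nonerased Y) then 1 else 0))
      \<le> (\<Sum>G\<in>genmats k n. \<Sum>S\<in>T. \<Prod>r\<in>S. hit_mass pc ps (\<Sum>j<k. G (j, r) * (u j - u1 j)))"
  proof (rule sum_mono)
    fix G :: "nat \<times> nat \<Rightarrow> 'f"
    have "(\<Sum>Y\<in>outputs (w + m) n. channel1 (w + m) n pc pe ps (codeword k bexp \<alpha> G u1) Y
            * (if t \<le> card (rowset (codeword k bexp \<alpha> G u) n \<inter> nonerased Y) then 1 else 0))
        \<le> (\<Sum>S\<in>T. \<Prod>r\<in>S. \<Sum>e\<in>rowset (codeword k bexp \<alpha> G u) n.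
              row_trans (w + m) pc pe ps (codeword k bexp \<alpha> G u1 r) (Some e))"
      unfolding T_def using w_pos
      by (intro channel1_hits_union_bound probs) (auto simp: length_codeword rowset_def)
    also have "\<dots> = (\<Sum>S\<in>T. \<Prod>r\<in>S. hit_mass pc ps (\<Sum>j<k. G (j, r) * (u j - u1 j)))"
      by (intro sum.cong prod.cong refl) (auto simp: T_def sum_rowset_row_trans)
    finally show "(\<Sum>Y\<in>outputs (w + m) n. channel1 (w + m) n pc pe ps (codeword k bexp \<alpha> G u1) Y
            * (if t \<le> card (rowset (codeword k bexp \<alpha> G u) n \<inter> nonerased Y) then 1 else 0))
        \<le> (\<Sum>S\<in>T. \<Prod>r\<in>S. hit_mass pc ps (\<Sum>j<k. G (j, r) * (u j - u1 j)))" .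
  qed
  also have "\<dots> = (\<Sum>S\<in>T. \<Sum>G\<in>genmats k n. \<Prod>r\<in>S. hit_mass pc ps (\<Sum>j<k. G (j, r) * (u j - u1 j)))"
    by (rule sum.swap)
  also have "\<dots> = (\<Sum>S\<in>T. NG * ((pc + ps) / q) ^ t)"
    using sum_genmats_prod_columns[of j0 k "\<lambda>j. u j - u1 j", OF j0]
    by (intro sum.cong refl) (auto simp: T_def NG_def q_def sum_hit_mass)
  also have "\<dots> = real (n choose t) * (NG * ((pc + ps) / q) ^ t)"
    using n_subsets[of "{..<n}" t] by (simp add: T_def)
  also have "\<dots> \<le> 2 ^ n * (NG * (1 / q) ^ t)"
  proof (intro mult_mono mult_left_mono power_mono divide_right_mono)
    show "real (n choose t) \<le> 2 ^ n"
      using binomial_le_pow2[of n t] by (metis of_nat_le_iff of_nat_numeral of_nat_power)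
  qed (use probs in \<open>auto simp: NG_def q_def\<close>)
  finally show ?thesis by (simp add: NG_def q_def power_one_over mult.commute)
qed

lemma channel_error_le:
  assumes probs: "pc \<ge> 0" "pe \<ge> 0" "ps \<ge> 0" "pc + pe + ps = 1" and u1: "u1 \<in> msgs k"
  shows "(\<Sum>Y\<in>outputs (w + m) n. channel1 (w + m) n pc pe ps (codeword k bexp \<alpha> G u1) Y
            * (if decode k n t bexp \<alpha> G Y \<noteq> Some u1 then 1 else 0))
       \<le> measure_pmf.prob (binomial_pmf n pc) {..<t}
         + (\<Sum>u\<in>msgs k - {u1}. \<Sum>Y\<in>outputs (w + m) n.
              channel1 (w + m) n pc pe ps (codeword k bexp \<alpha> G u1) Y
              * (if t \<le> card (rowset (codeword k bexp \<alpha> G u) n \<inter> nonerased Y) then 1 else 0))"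
proof -
  let ?X = "codeword k bexp \<alpha> G u1"
  let ?ch = "channel1 (w + m) n pc pe ps ?X"
  let ?A = "\<lambda>Y. if card {r\<in>{..<n}. Y ! r = Some (?X r)} < t then 1 else 0 :: real"
  let ?B = "\<lambda>u Y. if t \<le> card (rowset (codeword k bexp \<alpha> G u) n \<inter> nonerased Y) then 1 else 0 :: real"
  have "(\<Sum>Y\<in>outputs (w + m) n. ?ch Y * (if decode k n t bexp \<alpha> G Y \<noteq> Some u1 then 1 else 0))
      \<le> (\<Sum>Y\<in>outputs (w + m) n. ?ch Y * (?A Y + (\<Sum>u\<in>msgs k - {u1}. ?B u Y)))"
    by (intro sum_mono mult_left_mono channel1_nonneg probs decode_error_le[OF u1 inj_on_codeword])
       (simp add: outputs_def)
  also have "\<dots> = (\<Sum>Y\<in>outputs (w + m) n. ?ch Y * ?A Y)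
      + (\<Sum>u\<in>msgs k - {u1}. \<Sum>Y\<in>outputs (w + m) n. ?ch Y * ?B u Y)"
    by (simp add: distrib_left sum.distrib sum_distrib_left sum.swap[of _ "outputs (w + m) n"])
  also have "(\<Sum>Y\<in>outputs (w + m) n. ?ch Y * ?A Y) = measure_pmf.prob (binomial_pmf n pc) {..<t}"
    using channel1_correct_rows_binomial[OF probs _ length_codeword, where A = "{..<t}"] w_pos by simp
  finally show ?thesis .
qed

lemma average_error_le:
  assumes probs: "pc \<ge> 0" "pe \<ge> 0" "ps \<ge> 0" "pc + pe + ps = 1" and u1: "u1 \<in> msgs k"
  shows "(\<Sum>G\<in>genmats k n. \<Sum>Y\<in>outputs (w + m) n. \<Sum>\<sigma>\<in>{\<sigma>. \<sigma> permutes {..<n}}.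
            (1 / real (card (genmats k n :: (nat \<times> nat \<Rightarrow> 'f) set)))
            * channel1 (w + m) n pc pe ps (codeword k bexp \<alpha> G u1) Y
            * (1 / real (card {\<sigma>. \<sigma> permutes {..<n}}))
            * (if decode k n t bexp \<alpha> G (permute_rows n \<sigma> Y) \<noteq> Some u1 then 1 else 0))
       \<le> measure_pmf.prob (binomial_pmf n pc) {..<t} + real CARD('f) ^ k * 2 ^ n / real CARD('f) ^ t"
proof -
  define NG where "NG = real (card (genmats k n :: (nat \<times> nat \<Rightarrow> 'f) set))"
  define NP where "NP = real (card {\<sigma>. \<sigma> permutes {..<n}})"
  let ?ch = "\<lambda>G. channel1 (w + m) n pc pe ps (codeword k bexp \<alpha> G u1)"
  let ?E = "\<lambda>G Y. if decode k n t bexp \<alpha> G Y \<noteq> Some u1 then 1 else 0 :: real"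
  let ?B = "\<lambda>u G Y. if t \<le> card (rowset (codeword k bexp \<alpha> G u) n \<inter> nonerased Y) then 1 else 0 :: real"
  let ?P = "measure_pmf.prob (binomial_pmf n pc) {..<t}"
  have NG: "NG > 0" by (simp add: NG_def card_genmats)
  have NP: "NP > 0" by (simp add: NP_def card_permutations)
  have "(\<Sum>\<sigma>\<in>{\<sigma>. \<sigma> permutes {..<n}}. 1 / NG * ?ch G Y * (1 / NP) * ?E G (permute_rows n \<sigma> Y))
      = 1 / NG * (?ch G Y * ?E G Y)" if "Y \<in> outputs (w + m) n" for G Y
  proof -
    have "length Y = n" using that by (simp add: outputs_def)
    then have "(\<Sum>\<sigma>\<in>{\<sigma>. \<sigma> permutes {..<n}}. 1 / NG * ?ch G Y * (1 / NP) * ?E G (permute_rows n \<sigma> Y))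
        = NP * (1 / NG * ?ch G Y * (1 / NP) * ?E G Y)"
      by (simp add: decode_permute_rows NP_def)
    with NP show ?thesis by simp
  qed
  then have "(\<Sum>G\<in>genmats k n. \<Sum>Y\<in>outputs (w + m) n. \<Sum>\<sigma>\<in>{\<sigma>. \<sigma> permutes {..<n}}.
            1 / NG * ?ch G Y * (1 / NP) * ?E G (permute_rows n \<sigma> Y))
      = 1 / NG * (\<Sum>G\<in>genmats k n. \<Sum>Y\<in>outputs (w + m) n. ?ch G Y * ?E G Y)"
    by (simp add: sum_distrib_left)
  also have "\<dots> \<le> 1 / NG * (\<Sum>G\<in>genmats k n. ?P + (\<Sum>u\<in>msgs k - {u1}. \<Sum>Y\<in>outputs (w + m) n. ?ch G Y * ?B u G Y))"
    using NG by (intro mult_left_mono sum_mono channel_error_le[OF probs u1]) simp_all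
  also have "\<dots> = ?P + 1 / NG * (\<Sum>G\<in>genmats k n. \<Sum>u\<in>msgs k - {u1}. \<Sum>Y\<in>outputs (w + m) n. ?ch G Y * ?B u G Y)"
    using NG by (simp add: sum.distrib distrib_left NG_def[symmetric])
  also have "\<dots> = ?P + (\<Sum>u\<in>msgs k - {u1}. 1 / NG * (\<Sum>G\<in>genmats k n. \<Sum>Y\<in>outputs (w + m) n. ?ch G Y * ?B u G Y))"
    by (simp only: sum_distrib_left sum.swap[of _ "genmats k n"])
  also have "\<dots> \<le> ?P + (\<Sum>u\<in>msgs k - {u1}. 2 ^ n / real CARD('f) ^ t)"
    using NG pairwise_error_le[OF probs _ u1]
    by (intro add_left_mono sum_mono) (auto simp: NG_def field_simps)
  also have "\<dots> \<le> ?P + real CARD('f) ^ k * 2 ^ n / real CARD('f) ^ t"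
  proof -
    have "card (msgs k - {u1}) \<le> CARD('f) ^ k"
      using card_mono[OF finite_msgs, of "msgs k - {u1}" k] by (simp add: card_msgs)
    then have "real (card (msgs k - {u1})) \<le> real CARD('f) ^ k"
      by (metis of_nat_le_iff of_nat_power)
    then show ?thesis by (simp add: mult_right_mono divide_right_mono)
  qed
  finally show ?thesis by (simp add: NG_def NP_def)
qed

end

lemma union_bound_eq_powr:
  fixes q p \<epsilon> :: real
  assumes "q = 2 ^ w" "real k = real n * (p - 2 * \<epsilon>)" "real t = real n * (p - \<epsilon>)"
  shows "q ^ k * 2 ^ n / q ^ t = 2 powr (real n - real n * \<epsilon> * real w)"
proof -
  have t: "real t = real k + real n * \<epsilon>"
    using assms(2,3) by (simp add: algebra_simps)
  have "q ^ k * 2 ^ n / q ^ t = 2 powr (real w * real k + real n - real w * real t)"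
    using assms(1) by (simp add: powr_realpow[symmetric] powr_powr powr_add powr_diff)
  also have "real w * real k + real n - real w * real t = real n - real n * \<epsilon> * real w"
    using t by (simp add: algebra_simps)
  finally show ?thesis .
qed

lemma row_length_split:
  assumes "n = 2 ^ m" "\<beta> = real l / log 2 (real n)" "\<beta> > 1" "w = l - m"
  shows "l = w + m" "real w = (\<beta> - 1) * log 2 (real n)"
proof -
  have log_n: "log 2 (real n) = real m" using assms(1) by (simp add: log_nat_power)
  with assms(2,3) have "m > 0" by (cases m) auto
  with assms(2) log_n have l: "real l = \<beta> * real m" by simp
  also have "\<dots> > 1 * real m"
    using assms(3) \<open>m > 0\<close> by (intro mult_strict_right_mono) simp_all
  finally have "m < l" by simp
  with assms(4) show "l = w + m" by simp
  with l log_n show "real w = (\<beta> - 1) * log 2 (real n)"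
    by (simp add: algebra_simps)
qed

lemma error_bound_tendsto_zero:
  fixes \<epsilon> \<beta> :: real
  assumes "\<epsilon> > 0" "\<beta> > 1"
  shows "(\<lambda>N::nat. exp (- 2 * real N * \<epsilon>\<^sup>2) + 2 powr (real N - real N * \<epsilon> * (\<beta> - 1) * log 2 (real N)))
         \<longlonglongrightarrow> 0"
proof -
  define a where "a = \<epsilon> * (\<beta> - 1)"
  have "a > 0" "\<epsilon>\<^sup>2 > 0" using assms by (simp_all add: a_def)
  then have "(\<lambda>N::nat. exp (- 2 * real N * \<epsilon>\<^sup>2) + 2 powr (real N - a * (real N * log 2 (real N))))
         \<longlonglongrightarrow> 0"
    by real_asymp
  then show ?thesis by (simp add: a_def mult_ac)
qed

theorem mainTheorem6:
  fixes bexp :: "'f::{field,finite} \<Rightarrow> bool list"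
    and \<alpha> :: "nat \<Rightarrow> bool list"
    and l m n k t w :: nat
    and \<beta> \<epsilon> pc pe ps :: real
    and u1 :: "nat \<Rightarrow> 'f"
  assumes probs: "pc \<ge> 0" "pe \<ge> 0" "ps \<ge> 0" "pc + pe + ps = 1"
    and n_def: "n = 2 ^ m"
    and beta_def: "\<beta> = real l / log 2 (real n)"
    and beta_gt: "\<beta> > 1"
    and eps: "\<epsilon> > 0" "pc - 2 * \<epsilon> > 0"
    and k_def: "real k = real n * (pc - 2 * \<epsilon>)"
    and t_def: "real t = real n * (pc - \<epsilon>)"
    and w_def: "w = l - m"
    and field_card: "CARD('f) = 2 ^ w"
    and bexp_bij: "bij_betw bexp (UNIV :: 'f set) {xs. length xs = w}"
    and alpha_bij: "bij_betw \<alpha> {..<n} {xs. length xs = m}"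
    and u1: "u1 \<in> msgs k"
  shows "(\<Sum>G\<in>genmats k n. \<Sum>Y\<in>outputs l n. \<Sum>\<sigma>\<in>{\<sigma>. \<sigma> permutes {..<n}}.
            (1 / real (card (genmats k n :: (nat \<times> nat \<Rightarrow> 'f) set)))
            * channel1 l n pc pe ps (codeword k bexp \<alpha> G u1) Y
            * (1 / real (card {\<sigma>. \<sigma> permutes {..<n}}))
            * (if decode k n t bexp \<alpha> G (permute_rows n \<sigma> Y) \<noteq> Some u1 then 1 else 0))
         \<le> exp (- 2 * real n * \<epsilon>\<^sup>2) + 2 powr (real n - real n * \<epsilon> * real w)
     \<and> 2 powr (real n - real n * \<epsilon> * real w)
         = 2 powr (real n - real n * \<epsilon> * (\<beta> - 1) * log 2 (real n))
     \<and> ((\<lambda>N::nat. exp (- 2 * real N * \<epsilon>\<^sup>2)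
           + 2 powr (real N - real N * \<epsilon> * (\<beta> - 1) * log 2 (real N))) \<longlonglongrightarrow> 0)"
proof -
  interpret addressed_code n w m bexp \<alpha>
    using bexp_bij alpha_bij by unfold_locales
  have l_eq: "l = w + m" and w_eq: "real w = (\<beta> - 1) * log 2 (real n)"
    using row_length_split[OF n_def beta_def beta_gt w_def] by simp_all
  have "real CARD('f) ^ k * 2 ^ n / real CARD('f) ^ t = 2 powr (real n - real n * \<epsilon> * real w)"
    using field_card k_def t_def by (intro union_bound_eq_powr[where p = pc]) simp_all
  moreover have "measure_pmf.prob (binomial_pmf n pc) {..<t} \<le> exp (- 2 * real n * \<epsilon>\<^sup>2)"
    using probs eps n_def t_def by (intro binomial_prob_lessThan_le) auto
  ultimately show ?thesis
    using average_error_le[OF probs u1, where t = t] error_bound_tendsto_zero[OF eps(1) beta_gt]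
    unfolding l_eq w_eq by (simp add: mult.assoc)
qed

end
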